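(* For every integer $n\ge0$, $$\operatorname{pod}(n)=(-1)^n\sum_{\substack{c\in\mathcal C_{P_3}\\ |c|=n}}(-1)^{\ell(c)},$$ where $P_3=\{m(m+1)/2: m\in\mathbb N\}$ is the set of positive triangular numbers.
   Context: $\operatorname{pod}(n)$ is the number of partitions of $n$ in which odd parts are not repeated (even parts may repeat), with $\operatorname{pod}(0)=1$. A composition is an ordered finite sequence of positive integers (including the empty one); $|c|$ is the sum and $\ell(c)$ the number of parts; $\mathcal C_T$ is the set of compositions with all parts in $T$. *)

theory Defs
  imports Main "HOL-Library.Multiset"
begin

definition partitions :: "nat \<Rightarrow> nat multiset set" where
  "partitions n = {p. (\<forall>x\<in>#p. 0 < x) \<and> sum_mset p = n}"

definition pod :: "nat \<Rightarrow> nat" where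
  "pod n = card {p \<in> partitions n. \<forall>x. odd x \<longrightarrow> count p x \<le> 1}"

definition compositions :: "nat set \<Rightarrow> nat \<Rightarrow> nat list set" where
  "compositions T n = {c. set c \<subseteq> T \<and> (\<forall>x\<in>set c. 0 < x) \<and> sum_list c = n}"

definition P3 :: "nat set" where
  "P3 = {m * (m + 1) div 2 | m. m \<ge> 1}"

end

theory Submission
  imports Defs "HOL-Computational_Algebra.Formal_Power_Series"
begin

(*
  Replacing q by -q in the product formula for the generating function of pod gives
    sum_n (-1)^n pod(n) q^n = prod_{k>=1} (1 - q^(2k-1)) / (1 - q^(2k)),
  which by Gauss's identity is 1 / psi(q), where psi(q) = sum_{t>=0} q^(t(t+1)/2) = 1 + sum_{t in P3} q^t.
  Splitting off the first part of a composition shows that the signed generating function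
  sum_c (-1)^l(c) q^|c| of compositions with parts in P3 is 1 / (1 + sum_{t in P3} q^t) as well.

  Gauss's identity psi(q) (q;q^2)_oo = (q^2;q^2)_oo is derived from the q-binomial theorem for
  m = 2M + 1: the product prod_{k<=2M} (q^M + q^k) is a power of q times 2 prod_{s=1..M} (1 + q^s)^2,
  and the Gaussian binomial [2M+1, i]_q agrees with 1 / (q;q)_oo in low degrees as soon as i and
  2M + 1 - i are large. Infinite products are avoided throughout: every identity between them is
  proved coefficientwise up to a degree N, using finite products of length M >= 2N + 1.
*)

unbundle fps_syntax

section \<open>Gaussian binomial coefficients\<close>

fun qbinomial :: "'a::comm_ring_1 \<Rightarrow> nat \<Rightarrow> nat \<Rightarrow> 'a" where
  "qbinomial q 0 i = (if i = 0 then 1 else 0)"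
| "qbinomial q (Suc m) 0 = 1"
| "qbinomial q (Suc m) (Suc i) = q ^ Suc i * qbinomial q m (Suc i) + qbinomial q m i"

definition qpochhammer :: "'a::comm_ring_1 \<Rightarrow> nat \<Rightarrow> 'a" where
  "qpochhammer q k = (\<Prod>t\<in>{1..k}. 1 - q ^ t)"

lemma qpochhammer_0 [simp]: "qpochhammer q 0 = 1"
  by (simp add: qpochhammer_def)

lemma qpochhammer_Suc: "qpochhammer q (Suc k) = qpochhammer q k * (1 - q ^ Suc k)"
  by (simp add: qpochhammer_def prod.cl_ivl_Suc)

lemma qbinomial_eq_0: "m < i \<Longrightarrow> qbinomial q m i = 0"
  by (induction q m i rule: qbinomial.induct) auto

lemma qbinomial_0_right [simp]: "qbinomial q m 0 = 1"
  by (cases m) auto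

lemma qbinomial_self [simp]: "qbinomial q m m = 1"
  by (induction m) (auto simp: qbinomial_eq_0)

lemma qpochhammer_mult_qbinomial:
  "i \<le> m \<Longrightarrow> qpochhammer q i * qpochhammer q (m - i) * qbinomial q m i = qpochhammer q m"
proof (induction m arbitrary: i)
  case 0
  then show ?case by simp
next
  case (Suc m i)
  show ?case
  proof (cases i)
    case (Suc j)
    show ?thesis
    proof (cases "j = m")
      case False
      with Suc \<open>i \<le> Suc m\<close> have "j < m" by simp
      then have IH1: "qpochhammer q (Suc j) * qpochhammer q (m - Suc j) * qbinomial q m (Suc j) = qpochhammer q m"
        and IH2: "qpochhammer q j * qpochhammer q (m - j) * qbinomial q m j = qpochhammer q m"
        and "m - j = Suc (m - Suc j)"
        using Suc.IH by simp_all
      have "qpochhammer q i * qpochhammer q (Suc m - i) * qbinomial q (Suc m) i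
          = q ^ Suc j * (1 - q ^ (m - j))
              * (qpochhammer q (Suc j) * qpochhammer q (m - Suc j) * qbinomial q m (Suc j))
            + (1 - q ^ Suc j) * (qpochhammer q j * qpochhammer q (m - j) * qbinomial q m j)"
        unfolding Suc by (simp add: \<open>m - j = _\<close> qpochhammer_Suc algebra_simps)
      also have "\<dots> = q ^ Suc j * (1 - q ^ (m - j)) * qpochhammer q m + (1 - q ^ Suc j) * qpochhammer q m"
        unfolding IH1 IH2 ..
      also have "\<dots> = (1 - q ^ Suc m) * qpochhammer q m"
        using \<open>j < m\<close> by (simp add: algebra_simps flip: power_add)
      finally show ?thesis
        by (simp add: qpochhammer_Suc mult.commute)
    qed (use Suc in \<open>simp add: qbinomial_eq_0\<close>)
  qed simp
qed

definition tri :: "nat \<Rightarrow> nat" where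
  "tri t = t * (t + 1) div 2"

lemma double_tri: "2 * tri t = t * (t + 1)"
  unfolding tri_def by simp

lemma tri_0 [simp]: "tri 0 = 0"
  by (simp add: tri_def)

lemma tri_Suc: "tri (Suc t) = tri t + Suc t"
  using double_tri[of t] double_tri[of "Suc t"] by simp

lemma le_tri: "t \<le> tri t"
  using double_tri[of t] by (cases t) auto

lemma strict_mono_tri: "strict_mono tri"
  unfolding strict_mono_Suc_iff by (simp add: tri_Suc)

lemma q_binomial_theorem:
  fixes q x y :: "'a::comm_ring_1"
  shows "(\<Prod>k<m. y + x * q ^ k)
           = (\<Sum>i\<le>m. qbinomial q m i * q ^ tri (i - 1) * x ^ i * y ^ (m - i))"
proof (induction m arbitrary: x)
  case 0
  then show ?case by simp
next
  case (Suc m x)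
  define g where "g i = qbinomial q m i * q ^ tri (i - 1) * (x * q) ^ i * y ^ (m - i)" for i
  define e where "e i = q ^ tri i * x ^ Suc i * y ^ (m - i)" for i
  have "(\<Prod>k<Suc m. y + x * q ^ k) = (y + x) * (\<Prod>k<m. y + (x * q) * q ^ k)"
    unfolding prod.lessThan_Suc_shift by (simp add: mult.assoc)
  also have "\<dots> = y * (\<Sum>i\<le>m. g i) + x * (\<Sum>i\<le>m. g i)"
    using Suc.IH[of "x * q"] by (simp add: g_def algebra_simps)
  also have "x * (\<Sum>i\<le>m. g i) = (\<Sum>i\<le>m. qbinomial q m i * e i)"
  proof -
    have "x * g i = qbinomial q m i * e i" for i
      by (cases i) (simp_all add: g_def e_def tri_Suc power_add power_mult_distrib algebra_simps)
    then show ?thesis by (simp add: sum_distrib_left)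
  qed
  also have "y * (\<Sum>i\<le>m. g i) = y ^ Suc m + (\<Sum>i<m. y * g (Suc i))"
    by (simp add: sum.atMost_shift sum_distrib_left distrib_left g_def)
  also have "(\<Sum>i<m. y * g (Suc i)) = (\<Sum>i\<le>m. q ^ Suc i * qbinomial q m (Suc i) * e i)"
  proof -
    have "y * g (Suc i) = q ^ Suc i * qbinomial q m (Suc i) * e i" if "i < m" for i
    proof -
      from that have "m - i = Suc (m - Suc i)" by simp
      then show ?thesis
        unfolding g_def e_def by (simp add: tri_Suc power_add power_mult_distrib algebra_simps)
    qed
    then show ?thesis
      by (simp add: lessThan_Suc_atMost[symmetric] qbinomial_eq_0)
  qed
  also have "y ^ Suc m + (\<Sum>i\<le>m. q ^ Suc i * qbinomial q m (Suc i) * e i)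
               + (\<Sum>i\<le>m. qbinomial q m i * e i)
      = (\<Sum>i\<le>Suc m. qbinomial q (Suc m) i * q ^ tri (i - 1) * x ^ i * y ^ (Suc m - i))"
    unfolding sum.atMost_Suc_shift
    by (simp add: e_def distrib_right sum.distrib mult.assoc del: sum.atMost_Suc)
  finally show ?case .
qed

section \<open>A finite form of Gauss's identity\<close>

lemma tri_pred_add_mult:
  assumes "i \<le> 2 * M + 1"
  shows "tri (i - 1) + M * (2 * M + 1 - i) = tri M + M * M + (tri (M - i) + tri (i - Suc M))"
proof -
  have "2 * (tri (i - 1) + M * (2 * M + 1 - i)) = 2 * (tri M + M * M + (tri (M - i) + tri (i - Suc M)))"
  proof (cases "i \<le> M")
    case True
    then obtain s where "M = i + s" using le_Suc_ex by blast
    then show ?thesis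
      by (cases i) (simp_all add: add_mult_distrib2 double_tri double_tri[unfolded mult.commute[of 2]] algebra_simps)
  next
    case False
    then obtain s where "i = Suc M + s" using le_Suc_ex[of "Suc M" i] by auto
    moreover from this obtain r where "M = s + r" using assms le_Suc_ex[of s M] by auto
    ultimately show ?thesis
      by (simp add: add_mult_distrib2 double_tri double_tri[unfolded mult.commute[of 2]] algebra_simps)
  qed
  then show ?thesis by simp
qed

lemma (in comm_monoid_set) lessThan_add:
  fixes a b :: nat
  shows "F g {..<a + b} = F g {..<a} \<^bold>* F (\<lambda>s. g (a + s)) {..<b}"
  by (induction b) (simp_all add: lessThan_Suc ac_simps)

definition qprod_plus :: "'a::comm_ring_1 \<Rightarrow> nat \<Rightarrow> 'a" where
  "qprod_plus q M = (\<Prod>s<M. 1 + q ^ Suc s)"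

lemma prod_power_plus_lower:
  "(\<Prod>k<M. q ^ M + q ^ k) = q ^ tri (M - 1) * qprod_plus q M"
proof (induction M)
  case 0
  then show ?case by (simp add: qprod_plus_def)
next
  case (Suc M)
  have "(\<Prod>k<Suc M. q ^ Suc M + q ^ k) = (q ^ Suc M + 1) * (\<Prod>k<M. q * (q ^ M + q ^ k))"
    unfolding prod.lessThan_Suc_shift by (simp add: algebra_simps)
  also have "(\<Prod>k<M. q * (q ^ M + q ^ k)) = q ^ M * (\<Prod>k<M. q ^ M + q ^ k)"
    by (simp add: prod.distrib)
  also have "(q ^ Suc M + 1) * (q ^ M * (\<Prod>k<M. q ^ M + q ^ k))
      = q ^ (tri (M - 1) + M) * (qprod_plus q M * (1 + q ^ Suc M))"
    unfolding Suc.IH by (simp add: power_add algebra_simps)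
  also have "tri (M - 1) + M = tri (Suc M - 1)"
    by (cases M) (simp_all add: tri_Suc)
  finally show ?case
    by (simp add: qprod_plus_def)
qed

lemma prod_power_plus_upper:
  "(\<Prod>s<Suc M. q ^ M + q ^ (M + s)) = q ^ (M * Suc M) * (2 * qprod_plus q M)"
proof -
  have "(\<Prod>s<Suc M. q ^ M + q ^ (M + s)) = (\<Prod>s<Suc M. q ^ M * (1 + q ^ s))"
    by (simp add: power_add algebra_simps)
  also have "\<dots> = q ^ (M * Suc M) * (\<Prod>s<Suc M. 1 + q ^ s)"
    by (simp add: prod.distrib power_add power_mult del: prod.lessThan_Suc)
  also have "(\<Prod>s<Suc M. 1 + q ^ s) = 2 * qprod_plus q M"
    unfolding prod.lessThan_Suc_shift qprod_plus_def by simp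
  finally show ?thesis .
qed

lemma prod_power_plus:
  "(\<Prod>k<2 * M + 1. q ^ M + q ^ k) = q ^ (tri M + M * M) * (2 * qprod_plus q M ^ 2)"
proof -
  have "(\<Prod>k<2 * M + 1. q ^ M + q ^ k) = (\<Prod>k<M. q ^ M + q ^ k) * (\<Prod>s<Suc M. q ^ M + q ^ (M + s))"
    using prod.lessThan_add[of _ M "Suc M"] by (simp add: mult_2 del: prod.lessThan_Suc)
  also have "\<dots> = q ^ (tri (M - 1) + M * Suc M) * (2 * qprod_plus q M ^ 2)"
    unfolding prod_power_plus_lower prod_power_plus_upper by (simp add: power_add power2_eq_square)
  also have "tri (M - 1) + M * Suc M = tri M + M * M"
    by (cases M) (simp_all add: tri_Suc)
  finally show ?thesis .
qed

(* With truncated subtraction one of the two summands of the exponent vanishes; the exponent is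
   the triangular number of the distance from i to the centre of {0..2M+1}. *)
lemma qbinomial_tri_sum:
  fixes q :: "'a::idom"
  assumes "q \<noteq> 0"
  shows "(\<Sum>i\<le>2 * M + 1. qbinomial q (2 * M + 1) i * q ^ (tri (M - i) + tri (i - Suc M)))
           = 2 * qprod_plus q M ^ 2"
proof -
  have "q ^ (tri M + M * M) * (2 * qprod_plus q M ^ 2) = (\<Prod>k<2 * M + 1. q ^ M + 1 * q ^ k)"
    unfolding mult_1 by (rule prod_power_plus[symmetric])
  also have "\<dots> = (\<Sum>i\<le>2 * M + 1.
      qbinomial q (2 * M + 1) i * q ^ tri (i - 1) * 1 ^ i * (q ^ M) ^ (2 * M + 1 - i))"
    by (rule q_binomial_theorem)
  also have "\<dots> = q ^ (tri M + M * M) *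
      (\<Sum>i\<le>2 * M + 1. qbinomial q (2 * M + 1) i * q ^ (tri (M - i) + tri (i - Suc M)))"
    unfolding sum_distrib_left
  proof (intro sum.cong refl)
    fix i assume "i \<in> {..2 * M + 1}"
    then have "tri (i - 1) + M * (2 * M + 1 - i) = tri M + M * M + (tri (M - i) + tri (i - Suc M))"
      by (intro tri_pred_add_mult) simp
    then have "q ^ tri (i - 1) * (q ^ M) ^ (2 * M + 1 - i) = q ^ (tri M + M * M) * q ^ (tri (M - i) + tri (i - Suc M))"
      by (metis power_add power_mult)
    then show "qbinomial q (2 * M + 1) i * q ^ tri (i - 1) * 1 ^ i * (q ^ M) ^ (2 * M + 1 - i)
        = q ^ (tri M + M * M) * (qbinomial q (2 * M + 1) i * q ^ (tri (M - i) + tri (i - Suc M)))"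
      by (simp add: mult_ac)
  qed
  finally show ?thesis
    using assms by simp
qed

section \<open>Agreement of power series up to a given degree\<close>

definition fps_eq_upto :: "nat \<Rightarrow> 'a::zero fps \<Rightarrow> 'a fps \<Rightarrow> bool" where
  "fps_eq_upto N f g \<longleftrightarrow> (\<forall>i\<le>N. f $ i = g $ i)"

lemma fps_eq_upto_refl [simp]: "fps_eq_upto N f f"
  by (simp add: fps_eq_upto_def)

lemma fps_eq_upto_sym: "fps_eq_upto N f g \<Longrightarrow> fps_eq_upto N g f"
  by (simp add: fps_eq_upto_def)

lemma fps_eq_upto_trans [trans]: "fps_eq_upto N f g \<Longrightarrow> fps_eq_upto N g h \<Longrightarrow> fps_eq_upto N f h"
  by (simp add: fps_eq_upto_def)

lemma fps_eq_upto_mono: "fps_eq_upto N' f g \<Longrightarrow> N \<le> N' \<Longrightarrow> fps_eq_upto N f g"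
  by (simp add: fps_eq_upto_def)

lemma fps_eq_upto_mult:
  fixes f f' g g' :: "'a::comm_ring_1 fps"
  shows "fps_eq_upto N f f' \<Longrightarrow> fps_eq_upto N g g' \<Longrightarrow> fps_eq_upto N (f * g) (f' * g')"
  unfolding fps_eq_upto_def fps_mult_nth by (auto intro!: sum.cong)

lemma fps_eq_upto_sum:
  fixes f g :: "'b \<Rightarrow> 'a::comm_ring_1 fps"
  shows "(\<And>x. x \<in> A \<Longrightarrow> fps_eq_upto N (f x) (g x))
           \<Longrightarrow> fps_eq_upto N (\<Sum>x\<in>A. f x) (\<Sum>x\<in>A. g x)"
  unfolding fps_eq_upto_def fps_sum_nth by (auto intro!: sum.cong)

lemma fps_eq_upto_X_power_mult:
  fixes f :: "'a::comm_ring_1 fps"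
  shows "N < k \<Longrightarrow> fps_eq_upto N (fps_X ^ k * f) 0"
  unfolding fps_eq_upto_def by (auto simp: fps_X_power_mult_nth)

lemma fps_eq_upto_cancel:
  fixes e f g :: "'a::field fps"
  assumes "e $ 0 \<noteq> 0" and "fps_eq_upto N (e * f) (e * g)"
  shows "fps_eq_upto N f g"
proof -
  have "fps_eq_upto N (inverse e * (e * f)) (inverse e * (e * g))"
    by (rule fps_eq_upto_mult[OF fps_eq_upto_refl assms(2)])
  then show ?thesis
    using inverse_mult_eq_1[OF assms(1)] by (simp add: mult.assoc[symmetric])
qed

lemma fps_eq_upto_all_imp_eq: "(\<And>N. fps_eq_upto N f g) \<Longrightarrow> f = g"
  unfolding fps_eq_upto_def by (auto intro: fps_ext)

lemma qpochhammer_X_nth_0 [simp]: "qpochhammer (fps_X :: 'a::comm_ring_1 fps) k $ 0 = 1"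
  by (induction k) (simp_all add: qpochhammer_Suc)

lemma fps_eq_upto_qpochhammer_X:
  "N \<le> k \<Longrightarrow> fps_eq_upto N (qpochhammer (fps_X :: 'a::comm_ring_1 fps) k) (qpochhammer fps_X N)"
proof (induction k rule: dec_induct)
  case (step k)
  have "fps_eq_upto N (qpochhammer fps_X k * (1 - fps_X ^ Suc k)) (qpochhammer (fps_X :: 'a fps) N * 1)"
    using step by (intro fps_eq_upto_mult) (auto simp: fps_eq_upto_def)
  then show ?case by (simp add: qpochhammer_Suc)
qed simp

lemma fps_eq_upto_qpochhammer_X_qbinomial:
  assumes "N < i" and "N < m - i"
  shows "fps_eq_upto N (qpochhammer fps_X N * qbinomial (fps_X :: 'a::field fps) m i) 1"
proof -
  let ?P = "qpochhammer (fps_X :: 'a fps)"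
  have "fps_eq_upto N (?P N * (?P N * qbinomial fps_X m i)) (?P i * ?P (m - i) * qbinomial fps_X m i)"
    using assms by (auto simp flip: mult.assoc intro!: fps_eq_upto_mult fps_eq_upto_sym[OF fps_eq_upto_qpochhammer_X])
  also have "\<dots> = ?P m"
    using assms by (intro qpochhammer_mult_qbinomial) simp
  also have "fps_eq_upto N (?P m) (?P N * 1)"
    using assms by (simp add: fps_eq_upto_qpochhammer_X)
  finally show ?thesis
    by (rule fps_eq_upto_cancel[rotated]) simp
qed

section \<open>Gauss's identity up to a given degree\<close>

definition psi_trunc :: "nat \<Rightarrow> 'a::comm_ring_1 fps" where
  "psi_trunc M = (\<Sum>t\<le>M. fps_X ^ tri t)"

lemma sum_X_power_tri_distance:
  "(\<Sum>i\<le>2 * M + 1. (fps_X :: 'a::comm_ring_1 fps) ^ (tri (M - i) + tri (i - Suc M))) = 2 * psi_trunc M"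
proof -
  let ?f = "\<lambda>i. (fps_X :: 'a fps) ^ (tri (M - i) + tri (i - Suc M))"
  have "{..2 * M + 1} = {..<Suc M + Suc M}" by auto
  then have "(\<Sum>i\<le>2 * M + 1. ?f i) = (\<Sum>i<Suc M. ?f i) + (\<Sum>s<Suc M. ?f (Suc M + s))"
    by (simp only: sum.lessThan_add)
  also have "(\<Sum>i<Suc M. ?f i) = (\<Sum>i<Suc M. fps_X ^ tri (Suc M - Suc i))"
    by (intro sum.cong) auto
  also have "\<dots> = psi_trunc M"
    using sum.nat_diff_reindex[of "\<lambda>j. fps_X ^ tri j" "Suc M"]
    by (simp add: psi_trunc_def lessThan_Suc_atMost del: sum.lessThan_Suc)
  also have "(\<Sum>s<Suc M. ?f (Suc M + s)) = psi_trunc M"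
    unfolding psi_trunc_def lessThan_Suc_atMost by simp
  finally show ?thesis by simp
qed

lemma tri_distance_le_imp:
  assumes "tri (M - i) + tri (i - Suc M) \<le> N" and "2 * N + 1 \<le> M"
  shows "N < i" and "N < 2 * M + 1 - i"
  using assms le_tri[of "M - i"] le_tri[of "i - Suc M"] by linarith+

lemma fps_eq_upto_psi_trunc_qpochhammer:
  assumes "2 * N + 1 \<le> M"
  shows "fps_eq_upto N (psi_trunc M :: 'a::field_char_0 fps) (qpochhammer fps_X N * qprod_plus fps_X M ^ 2)"
proof -
  let ?P = "qpochhammer (fps_X :: 'a fps) N" and ?e = "\<lambda>i. tri (M - i) + tri (i - Suc M)"
  have summand: "fps_eq_upto N (?P * (qbinomial fps_X (2 * M + 1) i * fps_X ^ ?e i)) (fps_X ^ ?e i)" for i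
  proof (cases "?e i \<le> N")
    case True
    then have "fps_eq_upto N (?P * qbinomial fps_X (2 * M + 1) i) 1"
      using tri_distance_le_imp[OF _ assms] by (intro fps_eq_upto_qpochhammer_X_qbinomial) auto
    then have "fps_eq_upto N (?P * qbinomial fps_X (2 * M + 1) i * fps_X ^ ?e i) (1 * fps_X ^ ?e i)"
      by (rule fps_eq_upto_mult[OF _ fps_eq_upto_refl])
    then show ?thesis
      by (simp only: mult.assoc mult_1)
  next
    case False
    then have "N < ?e i"
      by simp
    then have "fps_eq_upto N (fps_X ^ ?e i * (?P * qbinomial fps_X (2 * M + 1) i)) 0"
      and "fps_eq_upto N ((fps_X :: 'a fps) ^ ?e i * 1) 0"
      by (rule fps_eq_upto_X_power_mult)+
    then have "fps_eq_upto N (?P * (qbinomial fps_X (2 * M + 1) i * fps_X ^ ?e i)) 0"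
      and "fps_eq_upto N ((fps_X :: 'a fps) ^ ?e i) 0"
      by (simp_all only: mult_1_right mult.commute[of "fps_X ^ _"] mult.assoc)
    then show ?thesis
      by (rule fps_eq_upto_trans[OF _ fps_eq_upto_sym])
  qed
  have "2 * (?P * qprod_plus fps_X M ^ 2)
      = ?P * (\<Sum>i\<le>2 * M + 1. qbinomial fps_X (2 * M + 1) i * fps_X ^ ?e i)"
    by (subst qbinomial_tri_sum) (simp_all add: mult_ac)
  also have "fps_eq_upto N \<dots> (\<Sum>i\<le>2 * M + 1. fps_X ^ ?e i)"
    unfolding sum_distrib_left by (intro fps_eq_upto_sum summand)
  also have "\<dots> = 2 * psi_trunc M"
    by (rule sum_X_power_tri_distance)
  finally have "fps_eq_upto N (2 * psi_trunc M) (2 * (?P * qprod_plus fps_X M ^ 2))"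
    by (rule fps_eq_upto_sym)
  then show ?thesis
    by (rule fps_eq_upto_cancel[rotated]) simp
qed

definition qprod_odd :: "'a::comm_ring_1 \<Rightarrow> nat \<Rightarrow> 'a" where
  "qprod_odd q M = (\<Prod>t<M. 1 - q ^ (2 * t + 1))"

definition qprod_even :: "'a::comm_ring_1 \<Rightarrow> nat \<Rightarrow> 'a" where
  "qprod_even q M = (\<Prod>t<M. 1 - q ^ (2 * t + 2))"

lemma qprod_even_X_nth_0 [simp]: "qprod_even (fps_X :: 'a::comm_ring_1 fps) M $ 0 = 1"
  by (induction M) (simp_all add: qprod_even_def)

lemma qpochhammer_double: "qpochhammer q (2 * M) = qprod_odd q M * qprod_even q M"
proof (induction M)
  case (Suc M)
  have double_Suc: "2 * Suc M = Suc (Suc (2 * M))" by simp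
  show ?case
    unfolding double_Suc qpochhammer_Suc Suc.IH by (simp add: qprod_odd_def qprod_even_def algebra_simps)
qed (simp add: qprod_odd_def qprod_even_def)

lemma qpochhammer_mult_qprod_plus: "qpochhammer q M * qprod_plus q M = qprod_even q M"
proof (induction M)
  case (Suc M)
  have "q ^ (2 * M + 2) = q ^ Suc M * q ^ Suc M"
    unfolding power_add[symmetric] by (simp add: mult_2)
  then have "(1 - q ^ Suc M) * (1 + q ^ Suc M) = 1 - q ^ (2 * M + 2)"
    by (simp add: algebra_simps)
  moreover have "qpochhammer q (Suc M) * qprod_plus q (Suc M)
      = qpochhammer q M * qprod_plus q M * ((1 - q ^ Suc M) * (1 + q ^ Suc M))"
    by (simp add: qpochhammer_Suc qprod_plus_def algebra_simps)
  ultimately show ?case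
    by (simp add: Suc.IH qprod_even_def)
qed (simp add: qprod_plus_def qprod_even_def)

lemma gauss_identity_trunc:
  assumes "2 * N + 1 \<le> M"
  shows "fps_eq_upto N (psi_trunc M * qprod_odd fps_X M) (qprod_even (fps_X :: 'a::field_char_0 fps) M)"
proof -
  let ?X = "fps_X :: 'a fps"
  have M: "fps_eq_upto N (qpochhammer ?X M) (qpochhammer ?X N)"
    and M2: "fps_eq_upto N (qpochhammer ?X (2 * M)) (qpochhammer ?X N)"
    using assms by (simp_all add: fps_eq_upto_qpochhammer_X)
  have "fps_eq_upto N (psi_trunc M * qprod_odd ?X M) (qpochhammer ?X N * qprod_plus ?X M ^ 2 * qprod_odd ?X M)"
    using assms by (intro fps_eq_upto_mult fps_eq_upto_psi_trunc_qpochhammer fps_eq_upto_refl)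
  also have "fps_eq_upto N \<dots> (qpochhammer ?X M * qprod_plus ?X M ^ 2 * qprod_odd ?X M)"
    using fps_eq_upto_sym[OF M] by (intro fps_eq_upto_mult fps_eq_upto_refl)
  also have "\<dots> = qprod_plus ?X M * qpochhammer ?X (2 * M)"
    by (simp add: power2_eq_square qpochhammer_double flip: qpochhammer_mult_qprod_plus)
  also have "fps_eq_upto N \<dots> (qprod_plus ?X M * qpochhammer ?X M)"
    using fps_eq_upto_trans[OF M2 fps_eq_upto_sym[OF M]] by (intro fps_eq_upto_mult fps_eq_upto_refl)
  also have "\<dots> = qprod_even ?X M"
    by (simp add: mult.commute qpochhammer_mult_qprod_plus)
  finally show ?thesis .
qed

definition psi_fps :: "'a::comm_ring_1 fps" where
  "psi_fps = Abs_fps (\<lambda>i. of_bool (i \<in> range tri))"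

lemma fps_eq_upto_psi_trunc:
  assumes "N \<le> M"
  shows "fps_eq_upto N (psi_trunc M) (psi_fps :: 'a::comm_ring_1 fps)"
  unfolding fps_eq_upto_def
proof (intro allI impI)
  fix i assume "i \<le> N"
  have "psi_trunc M $ i = (\<Sum>t\<le>M. of_bool (i = tri t) :: 'a)"
    by (simp add: psi_trunc_def fps_sum_nth of_bool_def)
  also have "\<dots> = of_bool (i \<in> range tri)"
  proof (cases "i \<in> range tri")
    case True
    then obtain t where t: "tri t = i" by blast
    with \<open>i \<le> N\<close> assms le_tri[of t] have "t \<le> M" by simp
    have "(\<Sum>s\<le>M. of_bool (i = tri s) :: 'a) = (\<Sum>s\<le>M. of_bool (s = t))"
      using t strict_mono_eq[OF strict_mono_tri] by (intro sum.cong) auto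
    with \<open>t \<le> M\<close> True show ?thesis
      by (simp add: of_bool_def sum.delta)
  next
    case False
    then have "(\<Sum>s\<le>M. of_bool (i = tri s) :: 'a) = 0"
      by (intro sum.neutral) auto
    with False show ?thesis
      by simp
  qed
  finally show "psi_trunc M $ i = (psi_fps :: 'a fps) $ i"
    by (simp add: psi_fps_def)
qed

section \<open>Partitions with parts in a given set\<close>

definition restricted_partitions :: "nat set \<Rightarrow> nat \<Rightarrow> nat multiset set" where
  "restricted_partitions S m = {p. set_mset p \<subseteq> S \<and> sum_mset p = m}"

lemma member_le_sum_mset: "x \<in># p \<Longrightarrow> x \<le> sum_mset (p :: nat multiset)"
  by (induction p) auto

lemma size_le_sum_mset: "0 \<notin># p \<Longrightarrow> size p \<le> sum_mset (p :: nat multiset)"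
  by (induction p) (auto simp: Suc_le_eq)

lemma sum_mset_eq_sum_count:
  assumes "finite S" "set_mset p \<subseteq> S"
  shows "sum_mset p = (\<Sum>k\<in>S. k * count p k)"
  using assms(2)
proof (induction p)
  case (add x p)
  have "(\<Sum>k\<in>S. k * count (add_mset x p) k) = (\<Sum>k\<in>S. k * count p k) + (\<Sum>k\<in>S. if k = x then k else 0)"
    by (subst sum.distrib[symmetric]) (rule sum.cong, auto)
  also have "(\<Sum>k\<in>S. if k = x then k else 0) = x"
    using add.prems assms(1) by simp
  finally show ?case
    using add by simp
qed simp

lemma finite_restricted_partitions:
  assumes "0 \<notin> S"
  shows "finite (restricted_partitions S m)"
proof (rule finite_subset)
  show "restricted_partitions S m \<subseteq> (\<Union>s\<le>m. multisets_of_size {..m} s)"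
  proof
    fix p assume "p \<in> restricted_partitions S m"
    then have "set_mset p \<subseteq> S" and "sum_mset p = m"
      by (simp_all add: restricted_partitions_def)
    then have "set_mset p \<subseteq> {..m}" and "size p \<le> m"
      using assms member_le_sum_mset size_le_sum_mset by auto
    then show "p \<in> (\<Union>s\<le>m. multisets_of_size {..m} s)"
      by (auto simp: multisets_of_size_def)
  qed
qed auto

lemma partitions_eq_restricted_partitions:
  assumes "m \<le> K"
  shows "partitions m = restricted_partitions {1..K} m"
proof -
  have "x \<le> K" if "x \<in># p" "sum_mset p = m" for x p
    using member_le_sum_mset[OF that(1)] that(2) assms by simp
  then show ?thesis
    by (auto simp: partitions_def restricted_partitions_def Suc_le_eq)
qed

lemma filter_mset_neq_plus_replicate_mset: "filter_mset (\<lambda>x. x \<noteq> k) p + replicate_mset (count p k) k = p"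
  using multiset_partition[of p "\<lambda>x. x \<noteq> k"] filter_eq_replicate_mset[of k p]
  by (simp add: eq_commute[of k])

lemma sum_restricted_partitions_insert:
  assumes "k \<notin> S" "0 \<notin> S" "0 < k"
  shows "(\<Sum>p\<in>restricted_partitions (insert k S) m. f p)
           = (\<Sum>c\<le>m div k. \<Sum>p\<in>restricted_partitions S (m - k * c). f (p + replicate_mset c k))"
proof -
  let ?RP = restricted_partitions
  have "(\<Sum>p\<in>?RP (insert k S) m. f p) = (\<Sum>(c, p)\<in>Sigma {..m div k} (\<lambda>c. ?RP S (m - k * c)). f (p + replicate_mset c k))"
  proof (rule sum.reindex_bij_witness[where i="\<lambda>(c, p). p + replicate_mset c k"
        and j="\<lambda>p. (count p k, filter_mset (\<lambda>x. x \<noteq> k) p)"])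
    fix cp assume "cp \<in> Sigma {..m div k} (\<lambda>c. ?RP S (m - k * c))"
    then obtain c p where cp: "cp = (c, p)" "c \<le> m div k" "p \<in> ?RP S (m - k * c)"
      by blast
    then have k_p: "k \<notin># p"
      using assms(1) by (auto simp: restricted_partitions_def)
    then have "filter_mset (\<lambda>x. x \<noteq> k) p = p"
      by (auto simp: filter_mset_eq_conv)
    moreover have "filter_mset (\<lambda>x. x \<noteq> k) (replicate_mset c k) = {#}"
      by (induction c) auto
    moreover have "k * c \<le> m"
      using cp(2) assms(3) by (simp add: less_eq_div_iff_mult_less_eq mult.commute)
    ultimately show "(count (case cp of (c, p) \<Rightarrow> p + replicate_mset c k) k,
          filter_mset (\<lambda>x. x \<noteq> k) (case cp of (c, p) \<Rightarrow> p + replicate_mset c k)) = cp"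
      and "(case cp of (c, p) \<Rightarrow> p + replicate_mset c k) \<in> ?RP (insert k S) m"
      using cp k_p by (auto simp: restricted_partitions_def not_in_iff)
  next
    fix p assume p: "p \<in> ?RP (insert k S) m"
    have "sum_mset p = sum_mset (filter_mset (\<lambda>x. x \<noteq> k) p + replicate_mset (count p k) k)"
      by (simp only: filter_mset_neq_plus_replicate_mset)
    also have "\<dots> = sum_mset (filter_mset (\<lambda>x. x \<noteq> k) p) + k * count p k"
      by simp
    finally show "(count p k, filter_mset (\<lambda>x. x \<noteq> k) p) \<in> Sigma {..m div k} (\<lambda>c. ?RP S (m - k * c))"
      using p assms(3) by (auto simp: restricted_partitions_def less_eq_div_iff_mult_less_eq mult.commute)
    show "(case (count p k, filter_mset (\<lambda>x. x \<noteq> k) p) of (c, p) \<Rightarrow> p + replicate_mset c k) = p"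
      by (simp add: filter_mset_neq_plus_replicate_mset)
  qed (simp add: filter_mset_neq_plus_replicate_mset)
  also have "\<dots> = (\<Sum>c\<le>m div k. \<Sum>p\<in>?RP S (m - k * c). f (p + replicate_mset c k))"
    using finite_restricted_partitions[OF assms(2)] by (subst sum.Sigma) auto
  finally show ?thesis .
qed

definition part_series :: "(nat \<Rightarrow> 'a::comm_ring_1) \<Rightarrow> nat \<Rightarrow> 'a fps" where
  "part_series w k = Abs_fps (\<lambda>j. if k dvd j then w (j div k) else 0)"

lemma part_series_mult_nth:
  assumes "0 < k"
  shows "(part_series w k * f) $ m = (\<Sum>c\<le>m div k. w c * f $ (m - k * c))"
proof -
  have "(part_series w k * f) $ m = (\<Sum>j\<in>{j\<in>{0..m}. k dvd j}. w (j div k) * f $ (m - j))"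
    unfolding fps_mult_nth part_series_def by (subst sum.inter_filter) (auto intro!: sum.cong)
  also have "{j\<in>{0..m}. k dvd j} = (\<lambda>c. k * c) ` {..m div k}"
    using assms by (auto simp: less_eq_div_iff_mult_less_eq mult.commute)
  also have "(\<Sum>j\<in>(\<lambda>c. k * c) ` {..m div k}. w (j div k) * f $ (m - j)) = (\<Sum>c\<le>m div k. w c * f $ (m - k * c))"
    using assms by (subst sum.reindex) (auto simp: inj_on_def)
  finally show ?thesis .
qed

lemma prod_part_series_nth:
  assumes "finite S" "0 \<notin> S"
  shows "(\<Prod>k\<in>S. part_series (w k) k) $ m = (\<Sum>p\<in>restricted_partitions S m. \<Prod>k\<in>S. w k (count p k))"
  using assms
proof (induction S arbitrary: m rule: finite_induct)
  case empty
  have "restricted_partitions {} m = (if m = 0 then {{#}} else {})"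
    by (auto simp: restricted_partitions_def)
  then show ?case by simp
next
  case (insert k S)
  have k: "0 < k" "0 \<notin> S" "k \<notin> S"
    using insert by auto
  have weight: "(\<Prod>s\<in>insert k S. w s (count (p + replicate_mset c k) s)) = w k c * (\<Prod>s\<in>S. w s (count p s))"
    if "p \<in> restricted_partitions S j" for p c j
  proof -
    have "count p k = 0"
      using that k by (auto simp: restricted_partitions_def not_in_iff[symmetric])
    moreover have "(\<Prod>s\<in>S. w s (count (p + replicate_mset c k) s)) = (\<Prod>s\<in>S. w s (count p s))"
      using k by (intro prod.cong) auto
    ultimately show ?thesis
      using insert.hyps by simp
  qed
  have "(\<Prod>k\<in>insert k S. part_series (w k) k) $ m = (part_series (w k) k * (\<Prod>k\<in>S. part_series (w k) k)) $ m"
    using insert.hyps by simp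
  also have "\<dots> = (\<Sum>c\<le>m div k. w k c * (\<Sum>p\<in>restricted_partitions S (m - k * c). \<Prod>s\<in>S. w s (count p s)))"
    using k by (simp add: part_series_mult_nth insert.IH)
  also have "\<dots> = (\<Sum>c\<le>m div k. \<Sum>p\<in>restricted_partitions S (m - k * c).
                      \<Prod>s\<in>insert k S. w s (count (p + replicate_mset c k) s))"
    unfolding sum_distrib_left
  proof (intro sum.cong refl)
    fix c p assume "p \<in> restricted_partitions S (m - k * c)"
    then show "w k c * (\<Prod>s\<in>S. w s (count p s)) = (\<Prod>s\<in>insert k S. w s (count (p + replicate_mset c k) s))"
      by (rule weight[symmetric])
  qed
  also have "\<dots> = (\<Sum>p\<in>restricted_partitions (insert k S) m. \<Prod>s\<in>insert k S. w s (count p s))"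
    using k by (simp add: sum_restricted_partitions_insert)
  finally show ?case .
qed

section \<open>The generating function of pod\<close>

(* The factor of part k in the generating function of pod at -q:
   1 - q^k for odd k and 1 / (1 - q^k) for even k. *)
definition pod_weight :: "nat \<Rightarrow> nat \<Rightarrow> 'a::comm_ring_1" where
  "pod_weight k c = (if odd k \<and> 1 < c then 0 else (-1) ^ (k * c))"

lemma part_series_pod_weight_odd:
  assumes "odd k"
  shows "part_series (pod_weight k) k = (1 - fps_X ^ k :: 'a::comm_ring_1 fps)"
proof (rule fps_ext)
  fix j
  have "k \<noteq> 0"
    using odd_pos[OF assms] by simp
  show "part_series (pod_weight k) k $ j = (1 - fps_X ^ k :: 'a fps) $ j"
  proof (cases "k dvd j")
    case True
    then obtain c where "j = k * c" by blast
    with \<open>k \<noteq> 0\<close> assms show ?thesis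
      by (cases "c \<le> 1") (auto simp: part_series_def pod_weight_def le_Suc_eq)
  next
    case False
    then have "j \<noteq> k" and "j \<noteq> 0"
      by (rule contrapos_nn, simp)+
    with False show ?thesis
      by (simp add: part_series_def)
  qed
qed

lemma part_series_pod_weight_even:
  assumes "even k" "0 < k"
  shows "part_series (pod_weight k) k * (1 - fps_X ^ k) = (1 :: 'a::comm_ring_1 fps)"
proof (rule fps_ext)
  fix j
  have nth: "part_series (pod_weight k) k $ i = (if k dvd i then 1 else (0 :: 'a))" for i
    using assms by (auto simp: part_series_def pod_weight_def elim!: dvdE)
  have "k dvd j \<longleftrightarrow> k dvd (j - k)" if "k \<le> j"
    using that by (simp add: dvd_minus_self)
  then show "(part_series (pod_weight k) k * (1 - fps_X ^ k)) $ j = (1 :: 'a fps) $ j"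
    using assms
    by (auto simp: nth algebra_simps fps_X_power_mult_nth dest: dvd_imp_le)
qed

definition pod_trunc :: "nat \<Rightarrow> 'a::comm_ring_1 fps" where
  "pod_trunc M = (\<Prod>k\<in>{1..2 * M}. part_series (pod_weight k) k)"

lemma pod_trunc_mult_qprod_even: "pod_trunc M * qprod_even fps_X M = qprod_odd (fps_X :: 'a::comm_ring_1 fps) M"
proof (induction M)
  case (Suc M)
  have "2 * Suc M = Suc (Suc (2 * M))" by simp
  then have "pod_trunc (Suc M) = pod_trunc M * part_series (pod_weight (2 * M + 1)) (2 * M + 1)
      * part_series (pod_weight (2 * M + 2)) (2 * M + 2)"
    by (simp add: pod_trunc_def prod.nat_ivl_Suc' mult_ac)
  also have "part_series (pod_weight (2 * M + 1)) (2 * M + 1) = (1 - fps_X ^ (2 * M + 1) :: 'a fps)"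
    by (simp add: part_series_pod_weight_odd)
  finally have "pod_trunc (Suc M) * qprod_even fps_X (Suc M)
      = pod_trunc M * qprod_even fps_X M * (1 - fps_X ^ (2 * M + 1))
        * (part_series (pod_weight (2 * M + 2)) (2 * M + 2) * (1 - fps_X ^ (2 * M + 2)) :: 'a fps)"
    by (simp add: qprod_even_def mult_ac)
  also have "part_series (pod_weight (2 * M + 2)) (2 * M + 2) * (1 - fps_X ^ (2 * M + 2)) = (1 :: 'a fps)"
    by (rule part_series_pod_weight_even) simp_all
  finally show ?case
    by (simp add: Suc.IH qprod_odd_def)
qed (simp add: pod_trunc_def qprod_even_def qprod_odd_def)

lemma prod_pod_weight_count:
  assumes "finite S" "set_mset p \<subseteq> S"
  shows "(\<Prod>k\<in>S. pod_weight k (count p k))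
           = (if \<forall>x. odd x \<longrightarrow> count p x \<le> 1 then (-1) ^ sum_mset p else (0 :: 'a::comm_ring_1))"
proof (cases "\<forall>x. odd x \<longrightarrow> count p x \<le> 1")
  case True
  then have "(\<Prod>k\<in>S. pod_weight k (count p k)) = (\<Prod>k\<in>S. (-1 :: 'a) ^ (k * count p k))"
    by (intro prod.cong) (auto simp: pod_weight_def not_le)
  also have "\<dots> = (-1) ^ sum_mset p"
    by (simp add: power_sum sum_mset_eq_sum_count[OF assms])
  finally show ?thesis
    using True by simp
next
  case False
  then obtain x where x: "odd x" "1 < count p x"
    by auto
  then have "x \<in> S"
    using assms(2) by (auto simp flip: count_greater_zero_iff)
  with x assms(1) show ?thesis
    by (auto simp: pod_weight_def intro!: prod_zero)
qed

lemma pod_trunc_nth: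
  assumes "m \<le> 2 * M"
  shows "pod_trunc M $ m = (-1) ^ m * (of_nat (pod m) :: 'a::comm_ring_1)"
proof -
  define V where "V p \<longleftrightarrow> (\<forall>x. odd x \<longrightarrow> count p x \<le> 1)" for p :: "nat multiset"
  have parts: "partitions m = restricted_partitions {1..2 * M} m"
    using assms by (rule partitions_eq_restricted_partitions)
  have "pod_trunc M $ m = (\<Sum>p\<in>partitions m. \<Prod>k\<in>{1..2 * M}. pod_weight k (count p k) :: 'a)"
    unfolding pod_trunc_def parts by (rule prod_part_series_nth) auto
  also have "\<dots> = (\<Sum>p\<in>partitions m. if V p then (-1) ^ m else 0)"
    by (intro sum.cong refl)
       (auto simp: parts prod_pod_weight_count V_def restricted_partitions_def)
  also have "\<dots> = (\<Sum>p\<in>{p\<in>partitions m. V p}. (-1) ^ m)"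
    using finite_restricted_partitions[of "{1..2 * M}" m] by (simp add: parts flip: sum.inter_filter)
  also have "\<dots> = (-1) ^ m * of_nat (pod m)"
    by (simp add: pod_def V_def)
  finally show ?thesis .
qed

definition signed_pod_fps :: "'a::comm_ring_1 fps" where
  "signed_pod_fps = Abs_fps (\<lambda>m. (-1) ^ m * of_nat (pod m))"

lemma fps_eq_upto_signed_pod_fps:
  "fps_eq_upto (2 * M) (signed_pod_fps * qprod_even fps_X M) (qprod_odd (fps_X :: 'a::comm_ring_1 fps) M)"
proof -
  have "fps_eq_upto (2 * M) signed_pod_fps (pod_trunc M :: 'a fps)"
    by (simp add: fps_eq_upto_def signed_pod_fps_def pod_trunc_nth)
  then have "fps_eq_upto (2 * M) (signed_pod_fps * qprod_even fps_X M) (pod_trunc M * qprod_even fps_X M :: 'a fps)"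
    by (rule fps_eq_upto_mult) simp
  then show ?thesis
    by (simp only: pod_trunc_mult_qprod_even)
qed

lemma psi_fps_mult_signed_pod_fps: "psi_fps * signed_pod_fps = (1 :: 'a::field_char_0 fps)"
proof (rule fps_eq_upto_all_imp_eq)
  fix N
  define M :: nat where "M = 2 * N + 1"
  let ?psi = "psi_fps :: 'a fps" and ?X = "fps_X :: 'a fps"
  have "qprod_even ?X M * (?psi * signed_pod_fps) = ?psi * (signed_pod_fps * qprod_even ?X M)"
    by (simp add: mult_ac)
  also have "fps_eq_upto N \<dots> (?psi * qprod_odd ?X M)"
    by (intro fps_eq_upto_mult fps_eq_upto_refl fps_eq_upto_mono[OF fps_eq_upto_signed_pod_fps])
       (simp add: M_def)
  also have "fps_eq_upto N \<dots> (psi_trunc M * qprod_odd ?X M)"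
    by (intro fps_eq_upto_mult fps_eq_upto_refl fps_eq_upto_sym[OF fps_eq_upto_psi_trunc])
       (simp add: M_def)
  also have "fps_eq_upto N \<dots> (qprod_even ?X M * 1)"
    using gauss_identity_trunc[of N M] by (simp add: M_def)
  finally show "fps_eq_upto N (?psi * signed_pod_fps) 1"
    by (rule fps_eq_upto_cancel[rotated]) (simp add: qprod_even_X_nth_0)
qed

section \<open>Signed compositions\<close>

lemma finite_compositions: "finite (compositions T m)"
proof (rule finite_subset)
  have "length c \<le> sum_list c" if "\<forall>x\<in>set c. 0 < x" for c :: "nat list"
    using that by (induction c) auto
  then show "compositions T m \<subseteq> {c. set c \<subseteq> {..m} \<and> length c \<le> m}"
    by (auto simp: compositions_def dest: member_le_sum_list)
  show "finite {c. set c \<subseteq> {..m} \<and> length c \<le> m}"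
    by (rule finite_lists_length_le) simp
qed

lemma compositions_0: "compositions T 0 = {[]}"
proof -
  have "c = []" if "c \<in> compositions T 0" for c
    using that by (cases c) (auto simp: compositions_def)
  then show ?thesis
    by (auto simp: compositions_def)
qed

lemma sum_compositions_Cons:
  assumes "0 \<notin> T" "0 < m"
  shows "(\<Sum>c\<in>compositions T m. f c) = (\<Sum>t\<in>{t\<in>T. t \<le> m}. \<Sum>c\<in>compositions T (m - t). f (t # c))"
proof -
  have nonempty: "c \<noteq> []" if "c \<in> compositions T m" for c
    using that assms(2) by (auto simp: compositions_def)
  have "(\<Sum>c\<in>compositions T m. f c) = (\<Sum>(t, c)\<in>Sigma {t\<in>T. t \<le> m} (\<lambda>t. compositions T (m - t)). f (t # c))"
  proof (rule sum.reindex_bij_witness[where i="\<lambda>(t, c). t # c" and j="\<lambda>c. (hd c, tl c)"])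
    fix c assume c: "c \<in> compositions T m"
    with nonempty[OF c] show "(hd c, tl c) \<in> Sigma {t\<in>T. t \<le> m} (\<lambda>t. compositions T (m - t))"
      and "(case (hd c, tl c) of (t, c) \<Rightarrow> t # c) = c"
      by (cases c; auto simp: compositions_def)+
  qed (use assms(1) nonempty in \<open>auto simp: compositions_def intro: gr0I\<close>)
  also have "\<dots> = (\<Sum>t\<in>{t\<in>T. t \<le> m}. \<Sum>c\<in>compositions T (m - t). f (t # c))"
    by (subst sum.Sigma) (simp_all add: finite_compositions)
  finally show ?thesis .
qed

definition signed_compositions_fps :: "nat set \<Rightarrow> 'a::comm_ring_1 fps" where
  "signed_compositions_fps T = Abs_fps (\<lambda>m. \<Sum>c\<in>compositions T m. (-1) ^ length c)"

lemma signed_compositions_fps_inverse: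
  assumes "0 \<notin> T"
  shows "(1 + Abs_fps (\<lambda>i. of_bool (i \<in> T))) * signed_compositions_fps T = (1 :: 'a::comm_ring_1 fps)"
proof (rule fps_ext)
  fix m
  let ?C = "signed_compositions_fps T :: 'a fps"
  have "(Abs_fps (\<lambda>i. of_bool (i \<in> T)) * ?C) $ m = (\<Sum>t\<in>{t\<in>T. t \<le> m}. ?C $ (m - t))"
  proof -
    have "(\<Sum>t\<in>{t\<in>T. t \<le> m}. ?C $ (m - t)) = (\<Sum>i\<in>{i\<in>{0..m}. i \<in> T}. ?C $ (m - i))"
      by (intro sum.cong) auto
    also have "\<dots> = (\<Sum>i=0..m. of_bool (i \<in> T) * ?C $ (m - i))"
      by (simp add: sum.inter_filter) (intro sum.cong, auto)
    finally show ?thesis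
      by (simp add: fps_mult_nth)
  qed
  moreover have "?C $ m = (if m = 0 then 1 else - (\<Sum>t\<in>{t\<in>T. t \<le> m}. ?C $ (m - t)))"
    using assms by (simp add: signed_compositions_fps_def compositions_0 sum_compositions_Cons sum_negf)
  ultimately show "((1 + Abs_fps (\<lambda>i. of_bool (i \<in> T))) * ?C) $ m = (1 :: 'a fps) $ m"
    using assms by (auto simp: distrib_right)
qed

lemma P3_eq_image_tri: "P3 = tri ` {1..}"
  by (auto simp: P3_def tri_def)

lemma zero_notin_P3: "0 \<notin> P3"
  unfolding P3_eq_image_tri
proof
  assume "0 \<in> tri ` {1..}"
  then obtain m where "1 \<le> m" "tri m = 0"
    by auto
  with le_tri[of m] show False
    by simp
qed

lemma range_tri: "range tri = insert 0 P3"
proof -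
  have "range tri = tri ` insert 0 {1..}"
    by (rule arg_cong[where f="image tri"]) auto
  then show ?thesis
    by (simp only: P3_eq_image_tri image_insert tri_0)
qed

lemma psi_fps_eq_P3: "psi_fps = 1 + Abs_fps (\<lambda>i. of_bool (i \<in> P3))"
  by (rule fps_ext) (auto simp: psi_fps_def range_tri zero_notin_P3)

theorem corollary1:
  fixes n :: nat
  shows "int (pod n) = (-1) ^ n * (\<Sum>c\<in>compositions P3 n. (-1) ^ length c)"
proof -
  have "(signed_pod_fps :: rat fps) = signed_pod_fps * (psi_fps * signed_compositions_fps P3)"
    unfolding psi_fps_eq_P3 signed_compositions_fps_inverse[OF zero_notin_P3] by simp
  also have "\<dots> = (psi_fps * signed_pod_fps) * signed_compositions_fps P3"
    by (simp only: mult_ac)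
  also have "\<dots> = signed_compositions_fps P3"
    by (simp add: psi_fps_mult_signed_pod_fps)
  finally have "signed_pod_fps $ n = (signed_compositions_fps P3 $ n :: rat)"
    by simp
  then have "of_int ((-1) ^ n * int (pod n)) = (of_int (\<Sum>c\<in>compositions P3 n. (-1) ^ length c) :: rat)"
    by (simp add: signed_pod_fps_def signed_compositions_fps_def)
  then have signed: "(-1) ^ n * int (pod n) = (\<Sum>c\<in>compositions P3 n. (-1) ^ length c)"
    by (simp only: of_int_eq_iff)
  have "int (pod n) = (-1) ^ n * ((-1) ^ n * int (pod n))"
    by (simp add: mult.assoc[symmetric] flip: power_mult_distrib)
  then show ?thesis
    by (simp only: signed)
qed

end
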